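(* Let $d\ge1$, $p>1$ with $p(d-2)<d$, $q=p/(p-1)$. For $a>0$ let $\rho(a)=\inf\{a\|h\|_2^2+\tfrac12\|\nabla h\|_2^2:\ h\in L^{2p}(\mathbb R^d),\ \|h\|_{2p}=1\}$, and let $\chi_{d,p}=\inf\{\tfrac12\|\nabla g\|_2^2:\ g\in L^2(\mathbb R^d)\cap L^{2p}(\mathbb R^d),\ \|g\|_2=\|g\|_{2p}=1\}$. Then $$\inf\{a-\rho(a):\ a>0\}=-\chi_{d,p}.$$
   Context: $\|\cdot\|_r$ is the $L^r(\mathbb R^d)$ norm; $\nabla$ the weak gradient with $\|\nabla h\|_2^2=\sum_i\|\partial_ih\|_2^2$ ($+\infty$ if $h\notin H^1$). *)

theory Defs
  imports "HOL-Analysis.Analysis"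
begin

text \<open>Functions on R^d are modelled as real-valued functions on a Euclidean space 'a,
  with d = DIM('a); the partial derivatives are taken along the basis vectors.\<close>

fun Ck :: "nat \<Rightarrow> ('a::euclidean_space \<Rightarrow> real) \<Rightarrow> bool" where
  "Ck 0 f = continuous_on UNIV f"
| "Ck (Suc k) f = (continuous_on UNIV f \<and>
     (\<exists>D. (\<forall>x. (f has_derivative D x) (at x)) \<and> (\<forall>b\<in>Basis. Ck k (\<lambda>x. D x b))))"

definition test_fn :: "('a::euclidean_space \<Rightarrow> real) \<Rightarrow> bool" where
  "test_fn \<phi> \<longleftrightarrow> (\<forall>k. Ck k \<phi>) \<and> compact (closure {x. \<phi> x \<noteq> 0})"

definition loc_int :: "('a::euclidean_space \<Rightarrow> real) \<Rightarrow> bool" where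
  "loc_int f \<longleftrightarrow> f \<in> borel_measurable lebesgue \<and>
     (\<forall>K. compact K \<longrightarrow> set_integrable lebesgue K f)"

definition weak_partial :: "('a::euclidean_space \<Rightarrow> real) \<Rightarrow> 'a \<Rightarrow> ('a \<Rightarrow> real) \<Rightarrow> bool" where
  "weak_partial h b g \<longleftrightarrow> loc_int h \<and> loc_int g \<and>
     (\<forall>\<phi>. test_fn \<phi> \<longrightarrow>
        (LINT x|lebesgue. h x * frechet_derivative \<phi> (at x) b) = - (LINT x|lebesgue. g x * \<phi> x))"

definition Lpow :: "real \<Rightarrow> ('a::euclidean_space \<Rightarrow> real) \<Rightarrow> ennreal" where
  "Lpow r h = (\<integral>\<^sup>+ x. ennreal (\<bar>h x\<bar> powr r) \<partial>lebesgue)"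

definition memLp :: "real \<Rightarrow> ('a::euclidean_space \<Rightarrow> real) \<Rightarrow> bool" where
  "memLp r h \<longleftrightarrow> h \<in> borel_measurable lebesgue \<and> Lpow r h < \<infinity>"

definition Lnorm :: "real \<Rightarrow> ('a::euclidean_space \<Rightarrow> real) \<Rightarrow> real" where
  "Lnorm r h = enn2real (Lpow r h) powr (1 / r)"

definition H1 :: "('a::euclidean_space \<Rightarrow> real) \<Rightarrow> bool" where
  "H1 h \<longleftrightarrow> memLp 2 h \<and> (\<forall>b\<in>Basis. \<exists>g. weak_partial h b g \<and> memLp 2 g)"

text \<open>||grad h||_2^2, equal to +infinity if h is not in H^1. (Weak derivatives are unique a.e.,
  so the choice below does not matter.)\<close>
definition grad_sq :: "('a::euclidean_space \<Rightarrow> real) \<Rightarrow> ennreal" where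
  "grad_sq h = (if H1 h then (\<Sum>b\<in>Basis. Lpow 2 (SOME g. weak_partial h b g \<and> memLp 2 g))
                else \<infinity>)"

definition rho :: "real \<Rightarrow> real \<Rightarrow> 'a::euclidean_space itself \<Rightarrow> ennreal" where
  "rho p a _ = (INF h \<in> {h :: 'a \<Rightarrow> real. memLp (2*p) h \<and> Lnorm (2*p) h = 1}.
                 ennreal a * Lpow 2 h + grad_sq h / 2)"

definition chi :: "real \<Rightarrow> 'a::euclidean_space itself \<Rightarrow> ennreal" where
  "chi p _ = (INF g \<in> {g :: 'a \<Rightarrow> real. memLp 2 g \<and> memLp (2*p) g \<and>
                 Lnorm 2 g = 1 \<and> Lnorm (2*p) g = 1}. grad_sq g / 2)"

end

theory Submission
  imports Defs "HOL-Computational_Algebra.Polynomial"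
begin

(* Write q = p/(p-1), d = DIM('a) and beta = 2q/d - 1; the hypothesis p(d-2) < d says beta > 0.
   - Lower bound: restricting the infimum defining rho(a) to functions with ||g||_2 = 1 gives
     rho(a) <= a + chi, i.e. a - rho(a) >= -chi.
   - Upper bound: for h with ||h||_{2p} = 1 and s = ||h||_2^2, the dilate g(x) = c h(mu x) with
     mu = s^(q/d), c = s^(q/(2p)) has ||g||_2 = ||g||_{2p} = 1 and (1/2)||grad g||^2 =
     s^beta (1/2)||grad h||^2; hence chi <= s^beta (1/2)||grad h||^2.  Together with the
     elementary inequality beta s + s^(-beta) >= beta + 1 this gives rho(beta c) >= (beta+1) c
     for every 0 < c <= chi, i.e. beta c - rho(beta c) <= -c.
   Since grad_sq uses an arbitrary choice of weak derivative, the scaling law for the Dirichlet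
   energy needs uniqueness of weak derivatives almost everywhere (the fundamental lemma of the
   calculus of variations). *)

text \<open>These closure properties are what is needed to show that the explicit cut-off functions
  below, and dilates of test functions, are test functions.\<close>

lemma Ck_cont: "Ck k f \<Longrightarrow> continuous_on UNIV f"
  by (cases k) auto

lemma Ck_Suc_imp_Ck: "Ck (Suc k) f \<Longrightarrow> Ck k f"
  by (induction k arbitrary: f) auto

lemma Ck_const: "Ck k (\<lambda>x::'a::euclidean_space. c)"
proof (induction k arbitrary: c)
  case 0
  then show ?case by auto
next
  case (Suc k)
  have "\<forall>x. ((\<lambda>x::'a. c) has_derivative (\<lambda>v. 0)) (at x)" by auto
  then show ?case using Suc.IH by (auto intro!: exI[of _ "\<lambda>x v. 0"])
qed

lemma Ck_add: "Ck k f \<Longrightarrow> Ck k g \<Longrightarrow> Ck k (\<lambda>x::'a::euclidean_space. f x + g x)"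
proof (induction k arbitrary: f g)
  case 0
  then show ?case by (auto intro: continuous_on_add)
next
  case (Suc k)
  from Suc.prems(1) obtain Df where cf: "continuous_on UNIV f"
    and Df: "\<forall>x. (f has_derivative Df x) (at x)" and Pf: "\<forall>b\<in>Basis. Ck k (\<lambda>x. Df x b)" by auto
  from Suc.prems(2) obtain Dg where cg: "continuous_on UNIV g"
    and Dg: "\<forall>x. (g has_derivative Dg x) (at x)" and Pg: "\<forall>b\<in>Basis. Ck k (\<lambda>x. Dg x b)" by auto
  show ?case
    unfolding Ck.simps
  proof (intro conjI continuous_on_add cf cg exI[of _ "\<lambda>x v. Df x v + Dg x v"] allI ballI)
    show "((\<lambda>x. f x + g x) has_derivative (\<lambda>v. Df x v + Dg x v)) (at x)" for x
      using Df Dg by (auto intro: has_derivative_add)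
    show "Ck k (\<lambda>x. Df x b + Dg x b)" if "b \<in> Basis" for b
      using Suc.IH[of "\<lambda>x. Df x b" "\<lambda>x. Dg x b"] Pf Pg that by blast
  qed
qed

lemma Ck_mult: "Ck k f \<Longrightarrow> Ck k g \<Longrightarrow> Ck k (\<lambda>x::'a::euclidean_space. f x * g x)"
proof (induction k arbitrary: f g)
  case 0
  then show ?case by (auto intro: continuous_on_mult)
next
  case (Suc k)
  from Suc.prems(1) obtain Df where cf: "continuous_on UNIV f"
    and Df: "\<forall>x. (f has_derivative Df x) (at x)" and Pf: "\<forall>b\<in>Basis. Ck k (\<lambda>x. Df x b)" by auto
  from Suc.prems(2) obtain Dg where cg: "continuous_on UNIV g"
    and Dg: "\<forall>x. (g has_derivative Dg x) (at x)" and Pg: "\<forall>b\<in>Basis. Ck k (\<lambda>x. Dg x b)" by auto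
  have fk: "Ck k f" "Ck k g"
    using Suc.prems Ck_Suc_imp_Ck by blast+
  show ?case
    unfolding Ck.simps
  proof (intro conjI continuous_on_mult cf cg exI[of _ "\<lambda>x v. f x * Dg x v + Df x v * g x"] allI ballI)
    show "((\<lambda>x. f x * g x) has_derivative (\<lambda>v. f x * Dg x v + Df x v * g x)) (at x)" for x
      using Df Dg by (auto intro: has_derivative_mult)
    show "Ck k (\<lambda>x. f x * Dg x b + Df x b * g x)" if "b \<in> Basis" for b
    proof (rule Ck_add)
      show "Ck k (\<lambda>x. f x * Dg x b)"
        using Suc.IH[of f "\<lambda>x. Dg x b"] fk Pg that by blast
      show "Ck k (\<lambda>x. Df x b * g x)"
        using Suc.IH[of "\<lambda>x. Df x b" g] fk Pf that by blast
    qed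
  qed
qed

lemma Ck_cmult: "Ck k f \<Longrightarrow> Ck k (\<lambda>x::'a::euclidean_space. c * f x)"
  using Ck_mult[OF Ck_const] by blast

lemma Ck_diff: "Ck k f \<Longrightarrow> Ck k g \<Longrightarrow> Ck k (\<lambda>x::'a::euclidean_space. f x - g x)"
  using Ck_add[of k f "\<lambda>x. (-1) * g x"] Ck_cmult[of k g "-1"] by simp

lemma Ck_prod:
  "finite S \<Longrightarrow> (\<And>i. i \<in> S \<Longrightarrow> Ck k (f i)) \<Longrightarrow> Ck k (\<lambda>x::'a::euclidean_space. \<Prod>i\<in>S. f i x)"
proof (induction S rule: finite_induct)
  case empty
  then show ?case using Ck_const by simp
next
  case (insert a S)
  then show ?case using Ck_mult[of k "f a"] by simp
qed

lemma Ck_exp: "Ck k f \<Longrightarrow> Ck k (\<lambda>x::'a::euclidean_space. exp (f x))"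
proof (induction k arbitrary: f)
  case 0
  then show ?case by (auto intro: continuous_on_exp)
next
  case (Suc k)
  from Suc.prems obtain Df where cf: "continuous_on UNIV f"
    and Df: "\<forall>x. (f has_derivative Df x) (at x)" and Pf: "\<forall>b\<in>Basis. Ck k (\<lambda>x. Df x b)" by auto
  have fk: "Ck k f" using Suc.prems Ck_Suc_imp_Ck by blast
  have "((\<lambda>x. exp (f x)) has_derivative (\<lambda>v. Df x v * exp (f x))) (at x)" for x
    using Df has_derivative_exp by blast
  moreover have "\<forall>b\<in>Basis. Ck k (\<lambda>x. Df x b * exp (f x))"
    using Pf Suc.IH[OF fk] Ck_mult by blast
  moreover have "continuous_on UNIV (\<lambda>x. exp (f x))" using cf by (rule continuous_on_exp)
  ultimately show ?case
    by (simp only: Ck.simps) (intro conjI exI[of _ "\<lambda>x v. Df x v * exp (f x)"] allI; simp)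
qed

lemma Ck_scaleR: "Ck k f \<Longrightarrow> Ck k (\<lambda>x::'a::euclidean_space. f (m *\<^sub>R x))"
proof (induction k arbitrary: f)
  case 0
  have "continuous_on UNIV (\<lambda>x::'a. m *\<^sub>R x)" by (intro continuous_intros)
  from continuous_on_compose2[OF Ck_cont[OF 0] this] show ?case by simp
next
  case (Suc k)
  from Suc.prems obtain Df where Df: "\<forall>x. (f has_derivative Df x) (at x)"
    and Pf: "\<forall>b\<in>Basis. Ck k (\<lambda>x. Df x b)" by auto
  have Df_lin: "Df y (m *\<^sub>R v) = m * Df y v" for y v
    using linear_scale[OF has_derivative_linear[OF Df[rule_format, of y]]] by simp
  have "((\<lambda>x. f (m *\<^sub>R x)) has_derivative (\<lambda>v. m * Df (m *\<^sub>R x) v)) (at x)" for x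
  proof -
    have "((\<lambda>x. m *\<^sub>R x) has_derivative (\<lambda>v. m *\<^sub>R v)) (at x)"
      by (rule bounded_linear_imp_has_derivative[OF bounded_linear_scaleR_right])
    from has_derivative_compose[OF this Df[rule_format]] show ?thesis
      by (simp only: Df_lin)
  qed
  moreover have "\<forall>b\<in>Basis. Ck k (\<lambda>x. m * Df (m *\<^sub>R x) b)"
    using Pf Suc.IH Ck_cmult by blast
  moreover have "continuous_on UNIV (\<lambda>x. f (m *\<^sub>R x))"
    using Suc.IH[of f] Suc.prems Ck_Suc_imp_Ck Ck_cont by blast
  ultimately show ?case
    by (simp only: Ck.simps) (intro conjI exI[of _ "\<lambda>x v. m * Df (m *\<^sub>R x) v"] allI; simp)
qed

text \<open>A smooth function of one real variable composed with an affine function of one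
  coordinate is smooth; this builds multivariate bumps from one-dimensional ones.\<close>
lemma Ck_comp_affine_coord:
  "Ck k (\<psi>::real\<Rightarrow>real) \<Longrightarrow> Ck k (\<lambda>x::'a::euclidean_space. \<psi> (m * (x \<bullet> b) + c))"
proof (induction k arbitrary: \<psi>)
  case 0
  have "continuous_on UNIV (\<lambda>x::'a. m * (x \<bullet> b) + c)" by (intro continuous_intros)
  from continuous_on_compose2[OF Ck_cont[OF 0] this] show ?case by simp
next
  case (Suc k)
  from Suc.prems obtain D where D: "\<forall>t. (\<psi> has_derivative D t) (at t)"
    and PD: "Ck k (\<lambda>t. D t 1)" by auto
  have D_lin: "D t s = s * D t 1" for t s
    using linear_scale[OF has_derivative_linear[OF D[rule_format, of t]], of s 1] by simp
  have "((\<lambda>x. \<psi> (m * (x \<bullet> b) + c)) has_derivative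
          (\<lambda>v. (m * (v \<bullet> b)) * D (m * (x \<bullet> b) + c) 1)) (at x)" for x
  proof -
    have "((\<lambda>x. m * (x \<bullet> b) + c) has_derivative (\<lambda>v. m * (v \<bullet> b))) (at x)"
      by (intro derivative_eq_intros) auto
    from has_derivative_compose[OF this D[rule_format]]
    have "((\<lambda>x. \<psi> (m * (x \<bullet> b) + c)) has_derivative
            (\<lambda>v. D (m * (x \<bullet> b) + c) (m * (v \<bullet> b)))) (at x)" .
    moreover have "(\<lambda>v. D (m * (x \<bullet> b) + c) (m * (v \<bullet> b)))
                   = (\<lambda>v. (m * (v \<bullet> b)) * D (m * (x \<bullet> b) + c) 1)"
      by (rule ext) (rule D_lin)
    ultimately show ?thesis by simp
  qed
  moreover have "\<forall>b'\<in>Basis. Ck k (\<lambda>x. (m * (b' \<bullet> b)) * D (m * (x \<bullet> b) + c) 1)"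
    using Ck_cmult[OF Suc.IH[OF PD]] by blast
  moreover have "continuous_on UNIV (\<lambda>x::'a. \<psi> (m * (x \<bullet> b) + c))"
    using Suc.IH[of \<psi>] Suc.prems Ck_Suc_imp_Ck Ck_cont by blast
  ultimately show ?case
    by (simp only: Ck.simps)
      (intro conjI exI[of _ "\<lambda>x v. (m * (v \<bullet> b)) * D (m * (x \<bullet> b) + c) 1"] allI; simp)
qed

section \<open>Smooth cut-off functions of boxes\<close>

text \<open>The flat functions t \<mapsto> P(1/t) e^(-1/t) for t > 0 and 0 for t \<le> 0, P a polynomial.
  They are closed under differentiation, which makes them all C^\<infinity>.\<close>
definition flat :: "real poly \<Rightarrow> real \<Rightarrow> real" where
  "flat P t = (if 0 < t then poly P (inverse t) * exp (- inverse t) else 0)"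

definition flat_deriv_poly :: "real poly \<Rightarrow> real poly" where
  "flat_deriv_poly P = [:0,0,1:] * (P - pderiv P)"

lemma poly_times_exp_neg_tendsto_0: "((\<lambda>y::real. poly P y * exp (- y)) \<longlongrightarrow> 0) at_top"
proof -
  have eq: "poly P y * exp (- y) = (\<Sum>i\<le>degree P. coeff P i * (y ^ i / exp y))" for y
  proof -
    have "poly P y * exp (- y) = (\<Sum>i\<le>degree P. coeff P i * y ^ i) / exp y"
      by (simp add: poly_altdef exp_minus divide_inverse)
    then show ?thesis by (simp add: sum_divide_distrib)
  qed
  have "((\<lambda>y. \<Sum>i\<le>degree P. coeff P i * (y ^ i / exp y)) \<longlongrightarrow> (\<Sum>i\<le>degree P. coeff P i * 0)) at_top"
    by (intro tendsto_sum tendsto_mult tendsto_const tendsto_power_div_exp_0)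
  then show ?thesis unfolding eq by simp
qed

lemma flat_has_derivative_pos:
  assumes "t > 0"
  shows "((\<lambda>t. poly P (inverse t) * exp (- inverse t)) has_real_derivative
           poly (flat_deriv_poly P) (inverse t) * exp (- inverse t)) (at t)"
proof -
  have i: "((\<lambda>x. inverse x) has_real_derivative - (inverse t ^ 2)) (at t)"
    using DERIV_inverse[of t UNIV] assms by (simp add: power2_eq_square)
  have a: "((\<lambda>x. poly P (inverse x)) has_real_derivative
             poly (pderiv P) (inverse t) * - (inverse t ^ 2)) (at t)"
    using DERIV_chain2[OF poly_DERIV i] .
  have b: "((\<lambda>x. exp (- inverse x)) has_real_derivative exp (- inverse t) * (inverse t ^ 2)) (at t)"
    using DERIV_chain2[OF DERIV_exp DERIV_minus[OF i]] by simp
  have "poly (pderiv P) y * - (y ^ 2) * E + E * (y ^ 2) * poly P y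
        = poly (flat_deriv_poly P) y * (E::real)" for y E
    by (simp add: flat_deriv_poly_def algebra_simps power2_eq_square)
  then show ?thesis by (rule DERIV_cong[OF DERIV_mult[OF a b]])
qed

lemma poly_inverse_times_exp_tendsto_0:
  "((\<lambda>t. poly P (inverse t) * exp (- inverse t)) \<longlongrightarrow> 0) (at_right (0::real))"
  using filterlim_compose[OF poly_times_exp_neg_tendsto_0 filterlim_inverse_at_top_right, of P]
  by simp

text \<open>At 0 the difference quotient of flat P from the right is flat (pCons 0 P).\<close>
lemma flat_has_derivative_0: "(flat P has_real_derivative 0) (at 0)"
proof -
  have "((\<lambda>h. (flat P (0 + h) - flat P 0) / h) \<longlongrightarrow> 0) (at 0)"
  proof (rule filterlim_split_at)
    have "\<forall>\<^sub>F h in at_left (0::real). h < 0"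
      unfolding eventually_at_filter by simp
    then have "\<forall>\<^sub>F h in at_left 0. (flat P (0 + h) - flat P 0) / h = 0"
      by eventually_elim (simp add: flat_def)
    then show "((\<lambda>h. (flat P (0 + h) - flat P 0) / h) \<longlongrightarrow> 0) (at_left 0)"
      by (rule tendsto_eventually)
    have "\<forall>\<^sub>F h in at_right (0::real). h > 0"
      using eventually_at_right_real[of 0 1] by (auto elim: eventually_mono)
    then have "\<forall>\<^sub>F h in at_right 0. poly (pCons 0 P) (inverse h) * exp (- inverse h)
                 = (flat P (0 + h) - flat P 0) / h"
      by eventually_elim (simp add: flat_def field_simps)
    from tendsto_cong[THEN iffD1, OF this poly_inverse_times_exp_tendsto_0]
    show "((\<lambda>h. (flat P (0 + h) - flat P 0) / h) \<longlongrightarrow> 0) (at_right 0)" .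
  qed
  then show ?thesis unfolding DERIV_def by simp
qed

lemma flat_has_derivative: "(flat P has_real_derivative flat (flat_deriv_poly P) t) (at t)"
proof -
  consider "t > 0" | "t < 0" | "t = 0" by linarith
  then show ?thesis
  proof cases
    case 1
    then have e: "flat (flat_deriv_poly P) t = poly (flat_deriv_poly P) (inverse t) * exp (- inverse t)"
      by (simp add: flat_def)
    show ?thesis
      unfolding e by (rule has_field_derivative_transform_within_open[OF flat_has_derivative_pos[OF 1],
            where S="{0<..}"]) (use 1 in \<open>auto simp: flat_def\<close>)
  next
    case 2
    have "((\<lambda>_. 0) has_real_derivative 0) (at t)" by simp
    then have "((flat P) has_real_derivative 0) (at t)"
      by (rule has_field_derivative_transform_within_open[where S="{..<0}"])
        (use 2 in \<open>auto simp: flat_def\<close>)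
    then show ?thesis using 2 by (simp add: flat_def)
  qed (simp add: flat_has_derivative_0 flat_def)
qed

lemma Ck_flat: "Ck k (flat P)"
proof (induction k arbitrary: P)
  case 0
  have "continuous_on UNIV (flat P)"
    using flat_has_derivative DERIV_isCont continuous_at_imp_continuous_on by blast
  then show ?case by simp
next
  case (Suc k)
  have c: "continuous_on UNIV (flat P)"
    using flat_has_derivative DERIV_isCont continuous_at_imp_continuous_on by blast
  have d: "\<forall>t. (flat P has_derivative (\<lambda>s. flat (flat_deriv_poly P) t * s)) (at t)"
    using flat_has_derivative unfolding has_field_derivative_def by blast
  show ?case
    by (simp only: Ck.simps)
      (intro conjI c exI[of _ "\<lambda>t s. flat (flat_deriv_poly P) t * s"] d; simp add: Suc.IH)
qed

lemma flat_1_nonneg: "flat 1 t \<ge> 0" and flat_1_pos_iff: "flat 1 t > 0 \<longleftrightarrow> t > 0"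
  by (auto simp: flat_def)

text \<open>A smooth function that is positive exactly on the open box from l to u, a product of
  one-dimensional flat functions written in the affine form of Ck_comp_affine_coord.\<close>
definition bump :: "'a::euclidean_space \<Rightarrow> 'a \<Rightarrow> 'a \<Rightarrow> real" where
  "bump l u x =
     (\<Prod>b\<in>Basis. flat 1 (1 * (x \<bullet> b) + - (l \<bullet> b)) * flat 1 ((-1) * (x \<bullet> b) + u \<bullet> b))"

lemma Ck_bump: "Ck k (bump l u)"
  unfolding bump_def[abs_def]
  by (intro Ck_prod Ck_mult Ck_comp_affine_coord Ck_flat) auto

lemma bump_nonneg: "bump l u x \<ge> 0"
  unfolding bump_def by (intro prod_nonneg mult_nonneg_nonneg flat_1_nonneg)

lemma bump_pos_iff: "bump l u x > 0 \<longleftrightarrow> x \<in> box l u"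
proof
  assume "x \<in> box l u"
  then show "bump l u x > 0"
    unfolding bump_def mem_box by (intro prod_pos mult_pos_pos) (auto simp: flat_1_pos_iff)
next
  assume pos: "bump l u x > 0"
  show "x \<in> box l u"
    unfolding mem_box
  proof
    fix b :: 'a
    assume b: "b \<in> Basis"
    have "(\<Prod>b\<in>Basis. flat 1 (1 * (x \<bullet> b) + - (l \<bullet> b)) * flat 1 ((-1) * (x \<bullet> b) + u \<bullet> b)) \<noteq> 0"
      using pos unfolding bump_def by linarith
    then have "flat 1 (1 * (x \<bullet> b) + - (l \<bullet> b)) * flat 1 ((-1) * (x \<bullet> b) + u \<bullet> b) \<noteq> 0"
      using b prod_zero_iff[OF finite_Basis] by blast
    then show "l \<bullet> b < x \<bullet> b \<and> x \<bullet> b < u \<bullet> b"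
      by (auto simp: flat_def split: if_splits)
  qed
qed

lemma bump_eq_0: "x \<notin> box l u \<Longrightarrow> bump l u x = 0"
  using bump_pos_iff[of l u x] bump_nonneg[of l u x] by linarith

definition box_cutoff :: "nat \<Rightarrow> 'a::euclidean_space \<Rightarrow> 'a \<Rightarrow> 'a \<Rightarrow> real" where
  "box_cutoff n l u x = 1 - exp ((- real n) * bump l u x)"

lemma Ck_box_cutoff: "Ck k (box_cutoff n l u)"
  unfolding box_cutoff_def[abs_def]
  by (intro Ck_diff Ck_const Ck_exp Ck_cmult Ck_bump)

lemma box_cutoff_eq_0_iff: "n > 0 \<Longrightarrow> box_cutoff n l u x = 0 \<longleftrightarrow> x \<notin> box l u"
proof -
  assume n: "n > 0"
  have "box_cutoff n l u x = 0 \<longleftrightarrow> (- real n) * bump l u x = 0"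
    unfolding box_cutoff_def by (metis exp_eq_one_iff eq_iff_diff_eq_0)
  also have "\<dots> \<longleftrightarrow> \<not> bump l u x > 0"
    using n bump_nonneg[of l u x] by auto
  finally show ?thesis using bump_pos_iff by blast
qed

lemma test_fn_box_cutoff: "n > 0 \<Longrightarrow> test_fn (box_cutoff n l u)"
proof -
  assume n: "n > 0"
  then have "{x. box_cutoff n l u x \<noteq> 0} = box l u"
    using box_cutoff_eq_0_iff by blast
  then show ?thesis
    unfolding test_fn_def by (simp add: Ck_box_cutoff bounded_box)
qed

lemma box_cutoff_bounds: "0 \<le> box_cutoff n l u x" "box_cutoff n l u x \<le> 1"
  using bump_nonneg[of l u x] by (auto simp: box_cutoff_def)

lemma box_cutoff_tendsto: "(\<lambda>n. box_cutoff n l u x) \<longlonglongrightarrow> indicator (box l u) x"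
proof (cases "x \<in> box l u")
  case True
  then have "exp (- bump l u x) < 1"
    using bump_pos_iff[of l u x] by simp
  then have "(\<lambda>n. 1 - exp (- bump l u x) ^ n) \<longlonglongrightarrow> 1 - 0"
    by (intro tendsto_diff tendsto_const LIMSEQ_power_zero) auto
  moreover have "box_cutoff n l u x = 1 - exp (- bump l u x) ^ n" for n
    unfolding box_cutoff_def by (simp add: exp_of_nat_mult[symmetric])
  ultimately show ?thesis using True by simp
next
  case False
  then show ?thesis using bump_eq_0[OF False] by (simp add: box_cutoff_def)
qed

section \<open>Uniqueness of weak derivatives\<close>

text \<open>Two measures on the Borel sets of a Euclidean space that are finite and agree on all
  open boxes are equal (boxes form an intersection-stable generator).\<close>
lemma measure_eq_on_boxes:
  fixes M N :: "'a::euclidean_space measure"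
  assumes sets: "sets M = sets borel" "sets N = sets borel"
    and fin: "\<And>l u. emeasure M (box l u) < \<infinity>"
    and eq: "\<And>l u. emeasure M (box l u) = emeasure N (box l u)"
  shows "M = N"
proof (rule measure_eqI_generator_eq)
  let ?E = "range (\<lambda>(a, b). box a b::'a set)"
  show "Int_stable ?E"
    by (auto simp: Int_stable_def box_Int_box)
  show "?E \<subseteq> Pow UNIV" "sets M = sigma_sets UNIV ?E" "sets N = sigma_sets UNIV ?E"
    by (simp_all add: sets borel_eq_box)
  let ?A = "\<lambda>n::nat. box (- (real n *\<^sub>R One)) (real n *\<^sub>R One) :: 'a set"
  show "range ?A \<subseteq> ?E" "(\<Union>i. ?A i) = UNIV"
    unfolding UN_box_eq_UNIV by auto
  show "emeasure M (?A i) \<noteq> \<infinity>" for i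
    using fin by (simp add: less_top)
  show "emeasure M X = emeasure N X" if "X \<in> ?E" for X
    using that eq by auto
qed

lemma nn_integral_less_top_if_integrable:
  "integrable M (h :: 'b \<Rightarrow> real) \<Longrightarrow> (\<integral>\<^sup>+x. ennreal (h x) \<partial>M) < \<infinity>"
  by (rule le_less_trans[OF nn_integral_mono[of M "\<lambda>x. ennreal (h x)" "\<lambda>x. ennreal (norm (h x))"]])
    (auto simp: integrable_iff_bounded)

text \<open>A Borel function whose integrals over all boxes vanish is zero almost everywhere: the
  densities of its positive and negative parts then define the same measure.\<close>
lemma lborel_AE_zero_if_box_integrals_zero:
  fixes g :: "'a::euclidean_space \<Rightarrow> real"
  assumes g[measurable]: "g \<in> borel_measurable lborel"
    and int: "\<And>l u. integrable lborel (\<lambda>x. indicator (box l u) x * g x)"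
    and zero: "\<And>l u. (\<integral>x. indicator (box l u) x * g x \<partial>lborel) = 0"
  shows "AE x in lborel. g x = 0"
proof -
  define M1 where "M1 = density lborel (\<lambda>x. ennreal (g x))"
  define M2 where "M2 = density lborel (\<lambda>x. ennreal (- g x))"
  have M1_box: "emeasure M1 (box l u) = (\<integral>\<^sup>+x. ennreal (indicator (box l u) x * g x) \<partial>lborel)"
    for l u :: 'a
    unfolding M1_def by (subst emeasure_density) (auto intro!: nn_integral_cong simp: indicator_def)
  have M2_box: "emeasure M2 (box l u) = (\<integral>\<^sup>+x. ennreal (- (indicator (box l u) x * g x)) \<partial>lborel)"
    for l u :: 'a
    unfolding M2_def by (subst emeasure_density) (auto intro!: nn_integral_cong simp: indicator_def)
  have fin1: "emeasure M1 (box l u) < \<infinity>" for l u :: 'a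
    unfolding M1_box by (rule nn_integral_less_top_if_integrable[OF int])
  have fin2: "emeasure M2 (box l u) < \<infinity>" for l u :: 'a
    unfolding M2_box by (rule nn_integral_less_top_if_integrable) (simp add: int)
  have "emeasure M1 (box l u) = emeasure M2 (box l u)" for l u :: 'a
  proof -
    have "enn2real (emeasure M1 (box l u)) = enn2real (emeasure M2 (box l u))"
      using zero[of l u] real_lebesgue_integral_def[OF int[of l u]] unfolding M1_box M2_box by simp
    then have "ennreal (enn2real (emeasure M1 (box l u))) = ennreal (enn2real (emeasure M2 (box l u)))"
      by simp
    then show ?thesis
      using fin1[of l u] fin2[of l u] by (auto simp: ennreal_enn2real_if split: if_splits)
  qed
  then have "M1 = M2"
    using fin1 by (intro measure_eq_on_boxes) (simp_all add: M1_def M2_def)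
  then have "AE x in lborel. ennreal (g x) = ennreal (- g x)"
    unfolding M1_def M2_def
    by (intro sigma_finite_measure.density_unique[OF sigma_finite_lborel]) auto
  moreover have "ennreal a = ennreal (- a) \<Longrightarrow> a = 0" for a :: real
    by (cases "a \<ge> 0") (auto simp: ennreal_neg ennreal_eq_0_iff)
  ultimately show ?thesis
    by (auto elim: AE_mp)
qed

text \<open>The same for Lebesgue-measurable functions, through a Borel representative.\<close>
lemma lebesgue_AE_zero_if_box_integrals_zero:
  fixes f :: "'a::euclidean_space \<Rightarrow> real"
  assumes f: "f \<in> borel_measurable lebesgue"
    and int: "\<And>l u. integrable lebesgue (\<lambda>x. indicator (box l u) x * f x)"
    and zero: "\<And>l u. (\<integral>x. indicator (box l u) x * f x \<partial>lebesgue) = 0"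
  shows "AE x in lebesgue. f x = 0"
proof -
  obtain g where g[measurable]: "g \<in> borel_measurable lborel" and fg: "AE x in lborel. f x = g x"
    using completion_ex_borel_measurable_real[OF f] by blast
  have fg': "AE x in lebesgue. f x = g x"
    using fg by (rule AE_completion)
  have box: "box l u \<in> sets lebesgue" for l u :: 'a
    by (rule sets_completionI_sets) simp
  have g': "g \<in> borel_measurable lebesgue"
    using g measurable_completion by blast
  have "integrable lborel (\<lambda>x. indicator (box l u) x * g x)" for l u :: 'a
  proof -
    have "integrable lebesgue (\<lambda>x. indicator (box l u) x * g x)"
      using int[of l u] by (rule integrable_cong_AE_imp)
        (use fg' g' box in \<open>auto elim: AE_mp intro!: borel_measurable_times borel_measurable_indicator\<close>)
    then show ?thesis by (subst (asm) integrable_completion) auto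
  qed
  moreover have "(\<integral>x. indicator (box l u) x * g x \<partial>lborel) = 0" for l u :: 'a
  proof -
    have "(\<integral>x. indicator (box l u) x * g x \<partial>lebesgue) = (\<integral>x. indicator (box l u) x * f x \<partial>lebesgue)"
      by (rule integral_cong_AE)
        (use fg' g' f box in \<open>auto elim: AE_mp intro!: borel_measurable_times borel_measurable_indicator\<close>)
    then show ?thesis using zero[of l u] by (subst (asm) integral_completion) auto
  qed
  ultimately have "AE x in lborel. g x = 0"
    by (intro lborel_AE_zero_if_box_integrals_zero) auto
  then have "AE x in lebesgue. g x = 0"
    by (rule AE_completion)
  with fg' show ?thesis by eventually_elim simp
qed

lemma box_cutoff_dominated:
  "norm (f x * box_cutoff n l u x) \<le> \<bar>indicator (cbox l u) x *\<^sub>R f x\<bar>"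
proof (cases "x \<in> box l u")
  case True
  then have "x \<in> cbox l u"
    using box_subset_cbox by blast
  then show ?thesis
    using box_cutoff_bounds[of n l u x] by (simp add: abs_mult mult_left_le)
next
  case False
  then show ?thesis
    using bump_eq_0[OF False] by (simp add: box_cutoff_def)
qed

text \<open>Integrating a locally integrable function against the cut-offs of a box approximates its
  integral over the box (dominated convergence, the dominating function being |f| on the
  closed box).\<close>
lemma box_cutoff_integrals:
  fixes f :: "'a::euclidean_space \<Rightarrow> real"
  assumes f: "loc_int f"
  shows "integrable lebesgue (\<lambda>x. indicator (box l u) x * f x)"
    and "integrable lebesgue (\<lambda>x. f x * box_cutoff n l u x)"
    and "(\<lambda>n. \<integral>x. f x * box_cutoff n l u x \<partial>lebesgue)
           \<longlonglongrightarrow> (\<integral>x. indicator (box l u) x * f x \<partial>lebesgue)"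
proof -
  have fm: "f \<in> borel_measurable lebesgue"
    using f unfolding loc_int_def by blast
  have "box l u \<in> sets lebesgue"
    by (rule sets_completionI_sets) simp
  then have A: "(\<lambda>x. f x * indicator (box l u) x) \<in> borel_measurable lebesgue"
    using fm by (intro borel_measurable_times borel_measurable_indicator)
  have "box_cutoff n l u \<in> borel_measurable lebesgue" for n
    using continuous_imp_measurable_on_sets_lebesgue[OF Ck_cont[OF Ck_box_cutoff[of 0 n l u]]]
    by simp
  then have B: "(\<lambda>x. f x * box_cutoff n l u x) \<in> borel_measurable lebesgue" for n
    using fm by (intro borel_measurable_times)
  have C: "integrable lebesgue (\<lambda>x. \<bar>indicator (cbox l u) x *\<^sub>R f x\<bar>)"
    using f unfolding loc_int_def set_integrable_def by (auto simp: compact_cbox)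
  have D: "AE x in lebesgue. (\<lambda>n. f x * box_cutoff n l u x) \<longlonglongrightarrow> f x * indicator (box l u) x"
    by (intro AE_I2 tendsto_mult tendsto_const box_cutoff_tendsto)
  have E: "AE x in lebesgue. norm (f x * box_cutoff n l u x) \<le> \<bar>indicator (cbox l u) x *\<^sub>R f x\<bar>"
    for n
    by (intro AE_I2 box_cutoff_dominated)
  have swap: "(\<lambda>x. indicator (box l u) x * f x) = (\<lambda>x. f x * indicator (box l u) x)"
    by (simp add: fun_eq_iff)
  show "integrable lebesgue (\<lambda>x. indicator (box l u) x * f x)"
    unfolding swap by (rule integrable_dominated_convergence[OF A B C D E])
  show "integrable lebesgue (\<lambda>x. f x * box_cutoff n l u x)"
    by (rule integrable_dominated_convergence2[OF A B C D E])
  show "(\<lambda>n. \<integral>x. f x * box_cutoff n l u x \<partial>lebesgue)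
          \<longlonglongrightarrow> (\<integral>x. indicator (box l u) x * f x \<partial>lebesgue)"
    unfolding swap by (rule integral_dominated_convergence[OF A B C D E])
qed

lemma loc_int_diff: "loc_int f \<Longrightarrow> loc_int g \<Longrightarrow> loc_int (\<lambda>x. f x - g x)"
  unfolding loc_int_def set_integrable_def
  by (auto simp: right_diff_distrib intro!: Bochner_Integration.integrable_diff)

text \<open>Testing against the
  cut-offs of a box shows that the integral of the difference over every box vanishes.\<close>
lemma AE_eq_if_test_fn_integrals_eq:
  fixes f1 f2 :: "'a::euclidean_space \<Rightarrow> real"
  assumes f1: "loc_int f1" and f2: "loc_int f2"
    and eq: "\<And>\<phi>. test_fn \<phi> \<Longrightarrow> (\<integral>x. f1 x * \<phi> x \<partial>lebesgue) = (\<integral>x. f2 x * \<phi> x \<partial>lebesgue)"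
  shows "AE x in lebesgue. f1 x = f2 x"
proof -
  define f where "f x = f1 x - f2 x" for x
  have f: "loc_int f"
    unfolding f_def using loc_int_diff[OF f1 f2] .
  have "(\<integral>x. indicator (box l u) x * f x \<partial>lebesgue) = 0" for l u :: 'a
  proof -
    have "(\<integral>x. f x * box_cutoff n l u x \<partial>lebesgue) = 0" if "n > 0" for n
    proof -
      have "(\<integral>x. f x * box_cutoff n l u x \<partial>lebesgue)
            = (\<integral>x. f1 x * box_cutoff n l u x \<partial>lebesgue) - (\<integral>x. f2 x * box_cutoff n l u x \<partial>lebesgue)"
        unfolding f_def left_diff_distrib
        by (rule Bochner_Integration.integral_diff)
          (use box_cutoff_integrals(2)[OF f1] box_cutoff_integrals(2)[OF f2] in auto)
      then show ?thesis
        using eq[OF test_fn_box_cutoff[OF that]] by simp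
    qed
    then have "(\<lambda>n. \<integral>x. f x * box_cutoff n l u x \<partial>lebesgue) \<longlonglongrightarrow> 0"
      by (intro tendsto_eventually eventually_mono[OF eventually_gt_at_top[of 0]])
    from LIMSEQ_unique[OF box_cutoff_integrals(3)[OF f] this] show ?thesis .
  qed
  then have "AE x in lebesgue. f x = 0"
    using f box_cutoff_integrals(1)[OF f] unfolding loc_int_def
    by (intro lebesgue_AE_zero_if_box_integrals_zero) auto
  then show ?thesis
    unfolding f_def by eventually_elim simp
qed

lemma weak_partial_AE_unique:
  assumes "weak_partial h b g1" and "weak_partial h b g2"
  shows "AE x in lebesgue. g1 x = g2 x"
proof (rule AE_eq_if_test_fn_integrals_eq)
  show "loc_int g1" "loc_int g2"
    using assms unfolding weak_partial_def by auto
  show "(\<integral>x. g1 x * \<phi> x \<partial>lebesgue) = (\<integral>x. g2 x * \<phi> x \<partial>lebesgue)" if "test_fn \<phi>" for \<phi>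
    using assms that unfolding weak_partial_def by (metis neg_equal_iff_equal)
qed

lemma grad_sq_eq_sum:
  assumes H: "H1 h" and D: "\<And>b. b \<in> Basis \<Longrightarrow> weak_partial h b (D b)"
  shows "grad_sq h = (\<Sum>b\<in>Basis. Lpow 2 (D b))"
proof -
  have "Lpow 2 (SOME g. weak_partial h b g \<and> memLp 2 g) = Lpow 2 (D b)" if b: "b \<in> Basis" for b
  proof -
    have "\<exists>g. weak_partial h b g \<and> memLp 2 g"
      using H b unfolding H1_def by blast
    then have "weak_partial h b (SOME g. weak_partial h b g \<and> memLp 2 g)"
      by (rule someI2_ex) blast
    from weak_partial_AE_unique[OF this D[OF b]]
    show ?thesis
      unfolding Lpow_def by (intro nn_integral_cong_AE) (auto elim: AE_mp)
  qed
  then show ?thesis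
    unfolding grad_sq_def using H by simp
qed

section \<open>Dilations\<close>

lemma lebesgue_dilation_density:
  assumes m: "m \<noteq> 0"
  shows "(lebesgue :: 'a::euclidean_space measure) =
    density (distr lebesgue lebesgue (\<lambda>x. m *\<^sub>R x)) (\<lambda>_. ennreal (\<bar>m\<bar> ^ DIM('a)))"
proof -
  have T: "(\<lambda>x::'a. 0 + (\<Sum>j\<in>Basis. (m * (x \<bullet> j)) *\<^sub>R j)) = (\<lambda>x. m *\<^sub>R x)"
    unfolding scaleR_scaleR[symmetric] scaleR_sum_right[symmetric] euclidean_representation by simp
  show ?thesis
    using lebesgue_affine_euclidean(1)[of "\<lambda>_::'a. m" "0::'a"] m unfolding T by (simp add: prod_constant)
qed

lemma measurable_dilation_iff:
  fixes F :: "'a::euclidean_space \<Rightarrow> real"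
  assumes m: "m \<noteq> 0"
  shows "(\<lambda>x. F (m *\<^sub>R x)) \<in> borel_measurable lebesgue \<longleftrightarrow> F \<in> borel_measurable lebesgue"
proof
  assume "F \<in> borel_measurable lebesgue"
  then show "(\<lambda>x. F (m *\<^sub>R x)) \<in> borel_measurable lebesgue"
    using measurable_compose[OF lebesgue_measurable_scaling] by blast
next
  assume "(\<lambda>x. F (m *\<^sub>R x)) \<in> borel_measurable lebesgue"
  from measurable_compose[OF lebesgue_measurable_scaling[of "1/m"] this] show "F \<in> borel_measurable lebesgue"
    using m by simp
qed

lemma nn_integral_dilation:
  fixes F :: "'a::euclidean_space \<Rightarrow> ennreal"
  assumes F: "F \<in> borel_measurable lebesgue" and m: "m \<noteq> 0"
  shows "(\<integral>\<^sup>+x. F x \<partial>lebesgue) = ennreal (\<bar>m\<bar> ^ DIM('a)) * (\<integral>\<^sup>+x. F (m *\<^sub>R x) \<partial>lebesgue)"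
proof -
  have "(\<integral>\<^sup>+x. F x \<partial>lebesgue) = (\<integral>\<^sup>+x. F x \<partial>density (distr lebesgue lebesgue (\<lambda>x. m *\<^sub>R x)) (\<lambda>_. ennreal (\<bar>m\<bar> ^ DIM('a))))"
    by (rule arg_cong[where f="\<lambda>M. integral\<^sup>N M F", OF lebesgue_dilation_density[OF m]])
  also have "\<dots> = (\<integral>\<^sup>+x. ennreal (\<bar>m\<bar> ^ DIM('a)) * F x \<partial>distr lebesgue lebesgue (\<lambda>x. m *\<^sub>R x))"
    by (subst nn_integral_density) (use F in auto)
  also have "\<dots> = ennreal (\<bar>m\<bar> ^ DIM('a)) * (\<integral>\<^sup>+x. F x \<partial>distr lebesgue lebesgue (\<lambda>x. m *\<^sub>R x))"
    by (rule nn_integral_cmult) (use F in auto)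
  also have "(\<integral>\<^sup>+x. F x \<partial>distr lebesgue lebesgue (\<lambda>x. m *\<^sub>R x)) = (\<integral>\<^sup>+x. F (m *\<^sub>R x) \<partial>lebesgue)"
    by (rule nn_integral_distr[OF lebesgue_measurable_scaling]) (use F in auto)
  finally show ?thesis .
qed

lemma integral_dilation:
  fixes F :: "'a::euclidean_space \<Rightarrow> real"
  assumes m: "m \<noteq> 0"
  shows "(\<integral>x. F (m *\<^sub>R x) \<partial>lebesgue) = (\<integral>x. F x \<partial>lebesgue) / \<bar>m\<bar> ^ DIM('a)"
proof -
  have "(\<integral>x. F x \<partial>lebesgue) = \<bar>m\<bar> ^ DIM('a) * (\<integral>x. F (m *\<^sub>R x) \<partial>lebesgue)"
  proof (cases "F \<in> borel_measurable lebesgue")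
    case True
    have "(\<integral>x. F x \<partial>lebesgue) = (\<integral>x. F x \<partial>density (distr lebesgue lebesgue (\<lambda>x. m *\<^sub>R x))
                                    (\<lambda>_. ennreal (\<bar>m\<bar> ^ DIM('a))))"
      by (rule arg_cong[where f="\<lambda>M. integral\<^sup>L M F", OF lebesgue_dilation_density[OF m]])
    also have "\<dots> = (\<integral>x. \<bar>m\<bar> ^ DIM('a) *\<^sub>R F x \<partial>distr lebesgue lebesgue (\<lambda>x. m *\<^sub>R x))"
      by (rule integral_density) (use True in auto)
    also have "\<dots> = \<bar>m\<bar> ^ DIM('a) * (\<integral>x. F (m *\<^sub>R x) \<partial>lebesgue)"
      using integral_distr[OF lebesgue_measurable_scaling True] by simp
    finally show ?thesis .
  next
    case False
    then have "\<not> integrable lebesgue F" "\<not> integrable lebesgue (\<lambda>x. F (m *\<^sub>R x))"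
      using measurable_dilation_iff[OF m, of F] borel_measurable_integrable by blast+
    then show ?thesis by (simp add: not_integrable_integral_eq)
  qed
  then show ?thesis using m by simp
qed

lemma integrable_dilation_iff:
  fixes F :: "'a::euclidean_space \<Rightarrow> real"
  assumes m: "m \<noteq> 0"
  shows "integrable lebesgue (\<lambda>x. F (m *\<^sub>R x)) \<longleftrightarrow> integrable lebesgue F"
proof (cases "F \<in> borel_measurable lebesgue")
  case True
  have n: "(\<lambda>x. ennreal (norm (F x))) \<in> borel_measurable lebesgue" using True by measurable
  have "(\<integral>\<^sup>+x. ennreal (norm (F x)) \<partial>lebesgue) = ennreal (\<bar>m\<bar> ^ DIM('a)) * (\<integral>\<^sup>+x. ennreal (norm (F (m *\<^sub>R x))) \<partial>lebesgue)"
    using nn_integral_dilation[OF n m] by simp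
  moreover have "ennreal (\<bar>m\<bar> ^ DIM('a)) \<noteq> 0" "ennreal (\<bar>m\<bar> ^ DIM('a)) \<noteq> \<infinity>" using m by auto
  ultimately have "(\<integral>\<^sup>+x. ennreal (norm (F x)) \<partial>lebesgue) < \<infinity> \<longleftrightarrow> (\<integral>\<^sup>+x. ennreal (norm (F (m *\<^sub>R x))) \<partial>lebesgue) < \<infinity>"
    by (auto simp: ennreal_mult_less_top less_top)
  then show ?thesis unfolding integrable_iff_bounded using True measurable_dilation_iff[OF m, of F] by auto
next
  case False
  then show ?thesis using measurable_dilation_iff[OF m, of F] borel_measurable_integrable by blast
qed

lemma Lpow_dilate:
  fixes h :: "'a::euclidean_space \<Rightarrow> real"
  assumes h: "h \<in> borel_measurable lebesgue" and m: "m \<noteq> 0" and c: "c \<ge> 0"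
  shows "Lpow r (\<lambda>x. c * h (m *\<^sub>R x)) = ennreal (c powr r / \<bar>m\<bar> ^ DIM('a)) * Lpow r h"
proof -
  let ?X = "\<integral>\<^sup>+x. ennreal (\<bar>h (m *\<^sub>R x)\<bar> powr r) \<partial>lebesgue"
  have hm: "(\<lambda>x. ennreal (\<bar>h x\<bar> powr r)) \<in> borel_measurable lebesgue" using h by measurable
  have L: "Lpow r h = ennreal (\<bar>m\<bar> ^ DIM('a)) * ?X"
    unfolding Lpow_def using nn_integral_dilation[OF hm m] by simp
  have "Lpow r (\<lambda>x. c * h (m *\<^sub>R x)) = (\<integral>\<^sup>+x. ennreal (c powr r) * ennreal (\<bar>h (m *\<^sub>R x)\<bar> powr r) \<partial>lebesgue)"
    unfolding Lpow_def
    by (intro nn_integral_cong) (use c in \<open>simp add: abs_mult powr_mult ennreal_mult\<close>)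
  also have "\<dots> = ennreal (c powr r) * ?X"
    by (rule nn_integral_cmult) (use h m in \<open>measurable\<close>)
  also have "\<dots> = ennreal (c powr r / \<bar>m\<bar> ^ DIM('a)) * (ennreal (\<bar>m\<bar> ^ DIM('a)) * ?X)"
  proof -
    have "ennreal (c powr r / \<bar>m\<bar> ^ DIM('a)) * ennreal (\<bar>m\<bar> ^ DIM('a)) = ennreal (c powr r)"
      using m by (subst ennreal_mult[symmetric]) auto
    then show ?thesis by (simp add: mult.assoc[symmetric])
  qed
  finally show ?thesis unfolding L .
qed

lemma memLp_dilate:
  fixes h :: "'a::euclidean_space \<Rightarrow> real"
  assumes h: "memLp r h" and m: "m \<noteq> 0" and c: "c \<ge> 0"
  shows "memLp r (\<lambda>x. c * h (m *\<^sub>R x))"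
proof -
  have hm: "h \<in> borel_measurable lebesgue" using h unfolding memLp_def by blast
  then have "(\<lambda>x. h (m *\<^sub>R x)) \<in> borel_measurable lebesgue" using measurable_dilation_iff[OF m] by blast
  then have "(\<lambda>x. c * h (m *\<^sub>R x)) \<in> borel_measurable lebesgue" by measurable
  moreover have "Lpow r (\<lambda>x. c * h (m *\<^sub>R x)) < \<infinity>"
    unfolding Lpow_dilate[OF hm m c] using h unfolding memLp_def by (simp add: ennreal_mult_less_top)
  ultimately show ?thesis unfolding memLp_def by blast
qed

text \<open>Dilation maps compact sets to compact sets, so local integrability is preserved.\<close>
lemma loc_int_dilate:
  fixes f :: "'a::euclidean_space \<Rightarrow> real"
  assumes f: "loc_int f" and m: "m \<noteq> 0"
  shows "loc_int (\<lambda>x. c * f (m *\<^sub>R x))"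
  unfolding loc_int_def
proof (intro conjI allI impI)
  have "f \<in> borel_measurable lebesgue" using f unfolding loc_int_def by blast
  then have "(\<lambda>x. f (m *\<^sub>R x)) \<in> borel_measurable lebesgue" using measurable_dilation_iff[OF m] by blast
  then show "(\<lambda>x. c * f (m *\<^sub>R x)) \<in> borel_measurable lebesgue" by measurable
  fix K :: "'a set" assume K: "compact K"
  let ?K' = "(\<lambda>x. m *\<^sub>R x) ` K"
  have "compact ?K'" using compact_scaling[OF K] .
  then have "integrable lebesgue (\<lambda>y. indicator ?K' y *\<^sub>R f y)"
    using f unfolding loc_int_def set_integrable_def by blast
  then have "integrable lebesgue (\<lambda>x. indicator ?K' (m *\<^sub>R x) *\<^sub>R f (m *\<^sub>R x))"
    using integrable_dilation_iff[OF m, of "\<lambda>y. indicator ?K' y *\<^sub>R f y"] by simp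
  then have "integrable lebesgue (\<lambda>x. c * (indicator ?K' (m *\<^sub>R x) *\<^sub>R f (m *\<^sub>R x)))"
    by (rule integrable_mult_right)
  moreover have "indicator ?K' (m *\<^sub>R x) = (indicator K x :: real)" for x
    using m by (auto simp: indicator_def)
  ultimately show "set_integrable lebesgue K (\<lambda>x. c * f (m *\<^sub>R x))"
    unfolding set_integrable_def by (simp add: mult.left_commute)
qed

text \<open>Dilates of test functions are test functions: the support is dilated by 1/m.\<close>
lemma test_fn_dilate:
  fixes \<psi> :: "'a::euclidean_space \<Rightarrow> real"
  assumes t: "test_fn \<psi>" and m: "m \<noteq> 0"
  shows "test_fn (\<lambda>y. \<psi> (m *\<^sub>R y))"
  unfolding test_fn_def
proof (intro conjI allI)
  show "Ck k (\<lambda>y. \<psi> (m *\<^sub>R y))" for k using t unfolding test_fn_def by (blast intro: Ck_scaleR)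
  have eq: "{y. \<psi> (m *\<^sub>R y) \<noteq> 0} = (\<lambda>x. (1/m) *\<^sub>R x) ` {x. \<psi> x \<noteq> 0}"
  proof
    show "{y. \<psi> (m *\<^sub>R y) \<noteq> 0} \<subseteq> (\<lambda>x. (1/m) *\<^sub>R x) ` {x. \<psi> x \<noteq> 0}"
    proof
      fix y assume "y \<in> {y. \<psi> (m *\<^sub>R y) \<noteq> 0}"
      then show "y \<in> (\<lambda>x. (1/m) *\<^sub>R x) ` {x. \<psi> x \<noteq> 0}"
        using m by (intro image_eqI[of _ _ "m *\<^sub>R y"]) auto
    qed
    show "(\<lambda>x. (1/m) *\<^sub>R x) ` {x. \<psi> x \<noteq> 0} \<subseteq> {y. \<psi> (m *\<^sub>R y) \<noteq> 0}"
      using m by auto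
  qed
  have "compact ((\<lambda>x. (1/m) *\<^sub>R x) ` closure {x. \<psi> x \<noteq> 0})"
    using t unfolding test_fn_def by (intro compact_scaling) blast
  also have "(\<lambda>x. (1/m) *\<^sub>R x) ` closure {x. \<psi> x \<noteq> 0} = closure ((\<lambda>x. (1/m) *\<^sub>R x) ` {x. \<psi> x \<noteq> 0})"
    using closure_scaleR[of "1/m" "{x. \<psi> x \<noteq> 0}"] by simp
  finally show "compact (closure {y. \<psi> (m *\<^sub>R y) \<noteq> 0})" unfolding eq .
qed

lemma frechet_derivative_dilate:
  fixes \<phi> :: "'a::euclidean_space \<Rightarrow> real"
  assumes t: "test_fn \<phi>"
  shows "frechet_derivative (\<lambda>x. \<phi> (m *\<^sub>R x)) (at x) b = m * frechet_derivative \<phi> (at (m *\<^sub>R x)) b"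
proof -
  have "Ck (Suc 0) \<phi>" using t unfolding test_fn_def by blast
  then obtain D where D: "\<forall>x. (\<phi> has_derivative D x) (at x)" by auto
  have g: "((\<lambda>x. m *\<^sub>R x) has_derivative (\<lambda>v. m *\<^sub>R v)) (at x)"
    by (rule bounded_linear_imp_has_derivative[OF bounded_linear_scaleR_right])
  have "(\<phi> has_derivative D (m *\<^sub>R x)) (at (m *\<^sub>R x))" using D by blast
  from has_derivative_compose[OF g this]
  have "((\<lambda>x. \<phi> (m *\<^sub>R x)) has_derivative (\<lambda>v. D (m *\<^sub>R x) (m *\<^sub>R v))) (at x)" .
  then have e1: "frechet_derivative (\<lambda>x. \<phi> (m *\<^sub>R x)) (at x) = (\<lambda>v. D (m *\<^sub>R x) (m *\<^sub>R v))"
    by (rule frechet_derivative_at[symmetric])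
  have e2: "frechet_derivative \<phi> (at (m *\<^sub>R x)) = D (m *\<^sub>R x)"
    using D frechet_derivative_at by metis
  have "linear (D (m *\<^sub>R x))" using D has_derivative_linear by blast
  from linear_scale[OF this, of m b] show ?thesis unfolding e1 e2 by simp
qed

text \<open>Weak derivatives of dilates: test against the dilated test function and change variables on
  both sides of the defining identity.\<close>
lemma weak_partial_dilate:
  fixes h k :: "'a::euclidean_space \<Rightarrow> real"
  assumes w: "weak_partial h b k" and m: "m \<noteq> 0"
  shows "weak_partial (\<lambda>x. c * h (m *\<^sub>R x)) b (\<lambda>x. (c * m) * k (m *\<^sub>R x))"
  unfolding weak_partial_def
proof (intro conjI allI impI)
  have h: "loc_int h" and k: "loc_int k"
    and eq: "\<And>\<phi>. test_fn \<phi> \<Longrightarrow> (\<integral>x. h x * frechet_derivative \<phi> (at x) b \<partial>lebesgue) = - (\<integral>x. k x * \<phi> x \<partial>lebesgue)"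
    using w unfolding weak_partial_def by auto
  show "loc_int (\<lambda>x. c * h (m *\<^sub>R x))" using loc_int_dilate[OF h m] .
  show "loc_int (\<lambda>x. (c * m) * k (m *\<^sub>R x))" using loc_int_dilate[OF k m] .
  fix \<psi> :: "'a \<Rightarrow> real" assume t: "test_fn \<psi>"
  define \<phi> where "\<phi> = (\<lambda>y. \<psi> ((1/m) *\<^sub>R y))"
  have tp: "test_fn \<phi>" unfolding \<phi>_def by (rule test_fn_dilate[OF t]) (use m in simp)
  have psi: "\<psi> = (\<lambda>x. \<phi> (m *\<^sub>R x))" unfolding \<phi>_def using m by (simp add: fun_eq_iff)
  have "(\<integral>x. c * h (m *\<^sub>R x) * frechet_derivative \<psi> (at x) b \<partial>lebesgue)
      = (\<integral>x. (c * m) * (h (m *\<^sub>R x) * frechet_derivative \<phi> (at (m *\<^sub>R x)) b) \<partial>lebesgue)"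
    unfolding psi frechet_derivative_dilate[OF tp] by (simp add: ac_simps)
  also have "\<dots> = (c * m) * (\<integral>x. h (m *\<^sub>R x) * frechet_derivative \<phi> (at (m *\<^sub>R x)) b \<partial>lebesgue)"
    by simp
  also have "(\<integral>x. h (m *\<^sub>R x) * frechet_derivative \<phi> (at (m *\<^sub>R x)) b \<partial>lebesgue)
     = (\<integral>x. h x * frechet_derivative \<phi> (at x) b \<partial>lebesgue) / \<bar>m\<bar> ^ DIM('a)"
    using integral_dilation[OF m, of "\<lambda>x. h x * frechet_derivative \<phi> (at x) b"] by simp
  also have "\<dots> = - (\<integral>x. k x * \<phi> x \<partial>lebesgue) / \<bar>m\<bar> ^ DIM('a)"
    using eq[OF tp] by simp
  also have "- (\<integral>x. k x * \<phi> x \<partial>lebesgue) / \<bar>m\<bar> ^ DIM('a) = - (\<integral>x. k (m *\<^sub>R x) * \<phi> (m *\<^sub>R x) \<partial>lebesgue)"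
    using integral_dilation[OF m, of "\<lambda>x. k x * \<phi> x"] by simp
  finally show "(\<integral>x. c * h (m *\<^sub>R x) * frechet_derivative \<psi> (at x) b \<partial>lebesgue) =
      - (\<integral>x. c * m * k (m *\<^sub>R x) * \<psi> x \<partial>lebesgue)"
    unfolding psi by (simp add: ac_simps)
qed

text \<open>Dilation law of the Dirichlet energy: each weak derivative of c h(m x) is c m times the
  dilated weak derivative of h, and the dilation divides integrals by m^d.\<close>
lemma grad_sq_dilate:
  fixes h :: "'a::euclidean_space \<Rightarrow> real"
  assumes H: "H1 h" and m: "m > 0" and c: "c > 0"
  shows "H1 (\<lambda>x. c * h (m *\<^sub>R x))"
    and "grad_sq (\<lambda>x. c * h (m *\<^sub>R x)) = ennreal ((c * m) powr 2 / m ^ DIM('a)) * grad_sq h"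
proof -
  define K where "K b = (SOME k. weak_partial h b k \<and> memLp 2 k)" for b
  have K: "weak_partial h b (K b) \<and> memLp 2 (K b)" if "b \<in> Basis" for b
    unfolding K_def
    by (rule someI_ex[of "\<lambda>k. weak_partial h b k \<and> memLp 2 k"]) (use H that in \<open>auto simp: H1_def\<close>)
  define KG where "KG b = (\<lambda>x. (c * m) * K b (m *\<^sub>R x))" for b
  have KG: "weak_partial (\<lambda>x. c * h (m *\<^sub>R x)) b (KG b) \<and> memLp 2 (KG b)" if "b \<in> Basis" for b
    unfolding KG_def using weak_partial_dilate[of h b "K b" m c] memLp_dilate[of 2 "K b" m "c * m"]
      K[OF that] m c by simp
  show H1_dilate: "H1 (\<lambda>x. c * h (m *\<^sub>R x))"
    using memLp_dilate[of 2 h m c] H KG m c unfolding H1_def by auto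
  have "grad_sq (\<lambda>x. c * h (m *\<^sub>R x)) = (\<Sum>b\<in>Basis. Lpow 2 (KG b))"
    using grad_sq_eq_sum[OF H1_dilate] KG by blast
  also have "\<dots> = (\<Sum>b\<in>Basis. ennreal ((c * m) powr 2 / m ^ DIM('a)) * Lpow 2 (K b))"
    unfolding KG_def using Lpow_dilate[of "K b" m "c * m" 2 for b] K m c
    by (intro sum.cong) (auto simp: memLp_def)
  also have "\<dots> = ennreal ((c * m) powr 2 / m ^ DIM('a)) * grad_sq h"
    unfolding grad_sq_def K_def using H by (simp add: sum_distrib_left)
  finally show "grad_sq (\<lambda>x. c * h (m *\<^sub>R x)) = ennreal ((c * m) powr 2 / m ^ DIM('a)) * grad_sq h" .
qed

section \<open>The variational problems rho and chi\<close>

lemma Lnorm_eq_1_iff: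
  assumes r: "r > 0"
  shows "Lnorm r h = 1 \<longleftrightarrow> Lpow r h = 1"
proof
  have "enn2real (Lpow r h) = Lnorm r h powr r"
    unfolding Lnorm_def using r by (simp add: powr_powr)
  moreover assume "Lnorm r h = 1"
  ultimately show "Lpow r h = 1"
    by simp
qed (simp add: Lnorm_def)

text \<open>A function of norm one in L^2p is not zero a.e., hence has nonzero L^2 integral.\<close>
lemma Lpow_2_nonzero:
  fixes h :: "'a::euclidean_space \<Rightarrow> real"
  assumes h: "memLp (2*p) h" and p: "p > 0" and one: "Lpow (2*p) h = 1"
  shows "Lpow 2 h \<noteq> 0"
proof
  assume z: "Lpow 2 h = 0"
  have hm: "h \<in> borel_measurable lebesgue" using h unfolding memLp_def by blast
  have "AE x in lebesgue. ennreal (\<bar>h x\<bar> powr 2) = 0"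
    using z unfolding Lpow_def by (subst (asm) nn_integral_0_iff_AE) (use hm in measurable)
  then have ae: "AE x in lebesgue. h x = 0"
    by (rule AE_mp) (auto intro!: AE_I2 simp: ennreal_eq_0_iff)
  have "AE x in lebesgue. ennreal (\<bar>h x\<bar> powr (2*p)) = 0"
    using ae by (rule AE_mp) (auto intro!: AE_I2)
  then have "Lpow (2*p) h = 0"
    unfolding Lpow_def by (subst nn_integral_0_iff_AE) (use hm in measurable)
  then show False using one by simp
qed

text \<open>The exponent beta = 2q/d - 1, q = p/(p-1), governing how the Dirichlet energy scales
  under the L^2p-preserving dilations that normalise the L^2 norm.\<close>
definition energy_exponent :: "real \<Rightarrow> nat \<Rightarrow> real" where
  "energy_exponent p d = 2 * (p / (p - 1)) / d - 1"

lemma energy_exponent_pos: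
  assumes p: "p > 1" and d: "d > 0" and sub: "p * (real d - 2) < real d"
  shows "energy_exponent p d > 0"
proof -
  have "real d * (p - 1) < 2 * p"
    using sub by (simp add: algebra_simps)
  then have "real d < 2 * (p / (p - 1))"
    using p by (simp add: field_simps)
  then have "1 < 2 * (p / (p - 1)) / real d"
    using d by (simp only: less_divide_eq_1_pos of_nat_0_less_iff)
  then show ?thesis
    unfolding energy_exponent_def by simp
qed

text \<open>Exponent bookkeeping for the dilation c h(mu x) with mu = s^(q/d), c = s^(q/2p): it turns
  L^2 integral s into 1, keeps the L^2p integral, and multiplies the energy by s^beta.\<close>
lemma dilation_exponents:
  fixes p s d :: real
  assumes p: "p > 1" and s: "s > 0" and d: "d > 0"
  defines "q \<equiv> p / (p - 1)"
  shows "(s powr (q/(2*p))) powr 2 / (s powr (q/d)) powr d * s = 1"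
    and "(s powr (q/(2*p))) powr (2*p) / (s powr (q/d)) powr d = 1"
    and "(s powr (q/(2*p)) * s powr (q/d)) powr 2 / (s powr (q/d)) powr d = s powr (2*q/d - 1)"
proof -
  have qp: "q/p - q + 1 = 0" using p unfolding q_def by (simp add: field_simps)
  have D: "(s powr (q/d)) powr d = s powr q" using d by (simp add: powr_powr)
  have C2: "(s powr (q/(2*p))) powr 2 = s powr (q/p)" using p by (simp add: powr_powr)
  have C2p: "(s powr (q/(2*p))) powr (2*p) = s powr q" using p by (simp add: powr_powr)
  have "(s powr (q/(2*p))) powr 2 / (s powr (q/d)) powr d * s = s powr (q/p - q + 1)"
    unfolding D C2 using s by (simp add: powr_diff powr_add)
  then show "(s powr (q/(2*p))) powr 2 / (s powr (q/d)) powr d * s = 1"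
    unfolding qp using s by simp
  show "(s powr (q/(2*p))) powr (2*p) / (s powr (q/d)) powr d = 1"
    unfolding D C2p using s by simp
  have "(s powr (q/(2*p)) * s powr (q/d)) powr 2 = s powr (q/p) * s powr (2*q/d)"
    using s d by (simp add: powr_mult powr_powr C2 mult.commute)
  then have "(s powr (q/(2*p)) * s powr (q/d)) powr 2 / (s powr (q/d)) powr d
             = s powr (q/p + 2*q/d - q)"
    unfolding D using s by (simp add: powr_diff powr_add)
  also have "q/p + 2*q/d - q = 2*q/d - 1" using qp by simp
  finally show "(s powr (q/(2*p)) * s powr (q/d)) powr 2 / (s powr (q/d)) powr d = s powr (2*q/d - 1)" .
qed

lemma normalising_dilate:
  fixes h :: "'a::euclidean_space \<Rightarrow> real" and p s :: real
  defines "q \<equiv> p / (p - 1)"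
  defines "\<mu> \<equiv> s powr (q / DIM('a))" and "c \<equiv> s powr (q / (2*p))"
  assumes p: "p > 1" and h2: "memLp 2 h" and hm: "memLp (2*p) h" and one: "Lpow (2*p) h = 1"
    and s: "Lpow 2 h = ennreal s" "s > 0"
  shows "memLp 2 (\<lambda>x. c * h (\<mu> *\<^sub>R x))" and "memLp (2*p) (\<lambda>x. c * h (\<mu> *\<^sub>R x))"
    and "Lnorm 2 (\<lambda>x. c * h (\<mu> *\<^sub>R x)) = 1" and "Lnorm (2*p) (\<lambda>x. c * h (\<mu> *\<^sub>R x)) = 1"
proof -
  let ?g = "\<lambda>x. c * h (\<mu> *\<^sub>R x)"
  have mu: "\<mu> > 0" and c: "c > 0"
    unfolding \<mu>_def c_def using s by auto
  have "\<mu> ^ DIM('a) = \<mu> powr DIM('a)"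
    using mu by (simp add: powr_realpow)
  then have E: "c powr 2 / \<mu> ^ DIM('a) * s = 1" "c powr (2*p) / \<mu> ^ DIM('a) = 1"
    using dilation_exponents(1,2)[OF p s(2), of "real DIM('a)"] unfolding c_def \<mu>_def q_def
    by auto
  have hmeas: "h \<in> borel_measurable lebesgue"
    using hm unfolding memLp_def by blast
  show "memLp 2 ?g" "memLp (2*p) ?g"
    using memLp_dilate[OF h2] memLp_dilate[OF hm] mu c by auto
  have "Lpow 2 ?g = ennreal (c powr 2 / \<mu> ^ DIM('a)) * ennreal s"
    using Lpow_dilate[OF hmeas, of \<mu> c 2] mu c s by simp
  also have "\<dots> = ennreal (c powr 2 / \<mu> ^ DIM('a) * s)"
    using mu s by (subst ennreal_mult) auto
  also have "\<dots> = 1"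
    using E(1) by (simp only: ennreal_1)
  finally show "Lnorm 2 ?g = 1"
    using Lnorm_eq_1_iff[of 2 ?g] by simp
  have "Lpow (2*p) ?g = ennreal (c powr (2*p) / \<mu> ^ DIM('a))"
    using Lpow_dilate[OF hmeas, of \<mu> c "2*p"] mu c one by simp
  also have "\<dots> = 1"
    using E(2) by (simp only: ennreal_1)
  finally show "Lnorm (2*p) ?g = 1"
    using Lnorm_eq_1_iff[of "2*p" ?g] p by simp
qed

text \<open>The key comparison: the normalising dilate of a competitor h for rho is a competitor for
  chi, so chi is at most s^beta times the energy of h, where s is the L^2 integral of h.\<close>
lemma chi_le_dilated_energy:
  fixes h :: "'a::euclidean_space \<Rightarrow> real"
  assumes p: "p > 1" and hm: "memLp (2*p) h" and one: "Lpow (2*p) h = 1"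
    and s: "Lpow 2 h = ennreal s" "s > 0"
  shows "chi p TYPE('a) \<le> ennreal (s powr energy_exponent p DIM('a)) * (grad_sq h / 2)"
proof (cases "H1 h")
  case False
  then show ?thesis
    using s by (simp add: grad_sq_def ennreal_mult_top divide_ennreal_def)
next
  case True
  define q where "q = p / (p - 1)"
  define \<mu> where "\<mu> = s powr (q / DIM('a))"
  define c where "c = s powr (q / (2*p))"
  have mu: "\<mu> > 0" and c: "c > 0"
    unfolding \<mu>_def c_def using s by auto
  have "\<mu> ^ DIM('a) = \<mu> powr DIM('a)"
    using mu by (simp add: powr_realpow)
  then have E: "(c * \<mu>) powr 2 / \<mu> ^ DIM('a) = s powr energy_exponent p DIM('a)"
    using dilation_exponents(3)[OF p s(2), of "real DIM('a)"]
    unfolding c_def \<mu>_def q_def energy_exponent_def by auto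
  have "memLp 2 h"
    using True unfolding H1_def by blast
  note dilate = normalising_dilate[OF p this hm one s]
  have "chi p TYPE('a) \<le> grad_sq (\<lambda>x. c * h (\<mu> *\<^sub>R x)) / 2"
    unfolding chi_def using dilate unfolding c_def \<mu>_def q_def by (intro INF_lower) auto
  also have "grad_sq (\<lambda>x. c * h (\<mu> *\<^sub>R x)) = ennreal (s powr energy_exponent p DIM('a)) * grad_sq h"
    using grad_sq_dilate(2)[OF True mu c] E by simp
  finally show ?thesis
    by (simp add: divide_ennreal_def mult.assoc)
qed

text \<open>Weighted AM-GM in the form beta s + s^(-beta) \<ge> beta + 1, from ln s \<le> s - 1 and
  1 + t \<le> e^t.\<close>
lemma weighted_am_gm:
  fixes s \<beta> :: real
  assumes s: "s > 0" and b: "\<beta> > 0"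
  shows "\<beta> + 1 \<le> \<beta> * s + s powr (- \<beta>)"
proof -
  have "1 - \<beta> * ln s \<le> exp (- \<beta> * ln s)"
    using exp_ge_add_one_self[of "- \<beta> * ln s"] by simp
  also have "exp (- \<beta> * ln s) = s powr (- \<beta>)"
    using s by (simp add: powr_def)
  finally have "1 - \<beta> * ln s \<le> s powr (- \<beta>)" .
  moreover have "\<beta> * ln s \<le> \<beta> * (s - 1)"
    using ln_le_minus_one[OF s] b by (simp add: mult_left_mono)
  ultimately show ?thesis by (simp add: algebra_simps)
qed

lemma energy_lower_bound:
  fixes c s \<beta> \<gamma> :: real
  assumes c: "c > 0" and s: "s > 0" and b: "\<beta> > 0" and le: "c \<le> s powr \<beta> * \<gamma>"
  shows "(\<beta> + 1) * c \<le> \<beta> * c * s + \<gamma>"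
proof -
  have "c * s powr (- \<beta>) \<le> s powr \<beta> * \<gamma> * s powr (- \<beta>)"
    using le s by (intro mult_right_mono) auto
  also have "\<dots> = \<gamma>"
    using s by (simp add: powr_minus field_simps)
  finally have "c * s powr (- \<beta>) \<le> \<gamma>" .
  moreover have "c * (\<beta> + 1) \<le> c * (\<beta> * s + s powr (- \<beta>))"
    using weighted_am_gm[OF s b] c by (intro mult_left_mono) auto
  ultimately show ?thesis by (simp add: algebra_simps)
qed

text \<open>rho a \<le> a + chi, since competitors for chi are competitors for rho with L^2 integral one.\<close>
lemma rho_le_chi:
  fixes p a :: real
  shows "rho p a TYPE('a::euclidean_space) \<le> ennreal a + chi p TYPE('a)"
proof -
  have "rho p a TYPE('a) - ennreal a \<le> chi p TYPE('a)"
    unfolding chi_def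
  proof (rule INF_greatest)
    fix g :: "'a \<Rightarrow> real"
    assume "g \<in> {g. memLp 2 g \<and> memLp (2*p) g \<and> Lnorm 2 g = 1 \<and> Lnorm (2*p) g = 1}"
    then have g: "memLp 2 g" "memLp (2*p) g" "Lnorm 2 g = 1" "Lnorm (2*p) g = 1" by auto
    have "rho p a TYPE('a) \<le> ennreal a * Lpow 2 g + grad_sq g / 2"
      unfolding rho_def by (rule INF_lower) (use g in auto)
    moreover have "Lpow 2 g = 1"
      using Lnorm_eq_1_iff[of 2 g] g(3) by simp
    ultimately show "rho p a TYPE('a) - ennreal a \<le> grad_sq g / 2"
      by (simp add: ennreal_minus_le_iff)
  qed
  then show ?thesis by (simp add: ennreal_minus_le_iff)
qed

text \<open>Conversely rho (beta c) \<ge> (beta + 1) c for every 0 < c \<le> chi: combine the key comparison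
  with the weighted AM-GM inequality.\<close>
lemma rho_ge:
  fixes p c :: real
  defines "\<beta> \<equiv> energy_exponent p DIM('a::euclidean_space)"
  assumes p: "p > 1" and b: "\<beta> > 0" and c: "c > 0" and chi: "ennreal c \<le> chi p TYPE('a)"
  shows "ennreal ((\<beta> + 1) * c) \<le> rho p (\<beta> * c) TYPE('a)"
  unfolding rho_def
proof (rule INF_greatest)
  fix h :: "'a \<Rightarrow> real"
  assume "h \<in> {h. memLp (2*p) h \<and> Lnorm (2*p) h = 1}"
  then have hm: "memLp (2*p) h" and one: "Lpow (2*p) h = 1"
    using Lnorm_eq_1_iff[of "2*p" h] p by auto
  show "ennreal ((\<beta> + 1) * c) \<le> ennreal (\<beta> * c) * Lpow 2 h + grad_sq h / 2"
  proof (cases "Lpow 2 h")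
    case top
    then show ?thesis using b c by (simp add: ennreal_mult_top)
  next
    case (real s)
    then have s: "s > 0"
      using Lpow_2_nonzero[OF hm _ one] p by auto
    have K: "ennreal c \<le> ennreal (s powr \<beta>) * (grad_sq h / 2)"
      using chi chi_le_dilated_energy[OF p hm one real(2) s] unfolding \<beta>_def by simp
    show ?thesis
    proof (cases "grad_sq h / 2")
      case (real \<gamma>)
      have "ennreal c \<le> ennreal (s powr \<beta> * \<gamma>)"
        using K real by (simp add: ennreal_mult)
      then have "c \<le> s powr \<beta> * \<gamma>"
        using real s by simp
      then have "(\<beta> + 1) * c \<le> \<beta> * c * s + \<gamma>"
        by (rule energy_lower_bound[OF c s b])
      moreover have "ennreal (\<beta> * c) * Lpow 2 h + grad_sq h / 2 = ennreal (\<beta> * c * s + \<gamma>)"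
        using \<open>Lpow 2 h = ennreal s\<close> real b c s by (simp add: ennreal_mult ennreal_plus)
      ultimately show ?thesis
        by (simp add: ennreal_leI)
    qed simp
  qed
qed

lemma gap_ge_neg_chi:
  fixes p a :: real
  assumes a: "a > 0"
  shows "- enn2ereal (chi p TYPE('a::euclidean_space)) \<le> ereal a - enn2ereal (rho p a TYPE('a))"
proof (cases "chi p TYPE('a)")
  case (real ch)
  then have le: "rho p a TYPE('a) \<le> ennreal (a + ch)"
    using rho_le_chi[of p a, where 'a='a] a by (simp add: ennreal_plus)
  show ?thesis
  proof (cases "rho p a TYPE('a)")
    case (real r)
    then have "ennreal r \<le> ennreal (a + ch)"
      using le by (simp del: ennreal_plus)
    then have "r \<le> a + ch"
      using \<open>ch \<ge> 0\<close> a by (subst (asm) ennreal_le_iff) auto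
    then show ?thesis
      using real \<open>chi p TYPE('a) = ennreal ch\<close> \<open>ch \<ge> 0\<close> by simp
  qed (use le in \<open>simp add: top_unique\<close>)
qed simp

text \<open>From rho (beta c) \<ge> (beta + 1) c: for every 0 \<le> c \<le> chi the infimum is at most - c
  (for c = 0 use a - rho a \<le> a with a \<rightarrow> 0).\<close>
lemma INF_gap_le:
  fixes p c :: real
  assumes p: "p > 1" and b: "energy_exponent p DIM('a::euclidean_space) > 0"
    and c: "c \<ge> 0" and chi: "ennreal c \<le> chi p TYPE('a)"
  shows "(INF a \<in> {0<..}. ereal a - enn2ereal (rho p a TYPE('a))) \<le> - ereal c"
proof (cases "c = 0")
  case True
  show ?thesis
  proof (rule ereal_le_epsilon2)
    fix e :: real
    assume e: "0 < e"
    have "(INF a \<in> {0<..}. ereal a - enn2ereal (rho p a TYPE('a)))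
          \<le> ereal e - enn2ereal (rho p e TYPE('a))"
      by (rule INF_lower) (use e in auto)
    also have "\<dots> \<le> ereal e"
      by (rule ereal_diff_le_self) simp
    finally show "(INF a \<in> {0<..}. ereal a - enn2ereal (rho p a TYPE('a))) \<le> - ereal c + ereal e"
      using True by simp
  qed
next
  case False
  define \<beta> where "\<beta> = energy_exponent p DIM('a)"
  have c: "c > 0" and bc: "\<beta> * c > 0"
    using False c b unfolding \<beta>_def by auto
  have ge: "ennreal ((\<beta> + 1) * c) \<le> rho p (\<beta> * c) TYPE('a)"
    using rho_ge[OF p b c chi] unfolding \<beta>_def .
  have "(INF a \<in> {0<..}. ereal a - enn2ereal (rho p a TYPE('a)))
        \<le> ereal (\<beta> * c) - enn2ereal (rho p (\<beta> * c) TYPE('a))"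
    by (rule INF_lower) (use bc in auto)
  also have "\<dots> \<le> - ereal c"
  proof (cases "rho p (\<beta> * c) TYPE('a)")
    case (real r)
    then have "(\<beta> + 1) * c \<le> r"
      using ge by simp
    then show ?thesis
      using real by (simp add: algebra_simps)
  qed simp
  finally show ?thesis .
qed

lemma le_neg_enn2ereal:
  fixes y :: ereal and x :: ennreal
  assumes bound: "\<And>c. 0 \<le> c \<Longrightarrow> ennreal c \<le> x \<Longrightarrow> y \<le> - ereal c"
  shows "y \<le> - enn2ereal x"
proof (cases x)
  case (real r)
  then show ?thesis
    using bound[of r] by simp
next
  case top
  have "y \<le> ereal B" for B
  proof -
    have "y \<le> - ereal (max 0 (- B))"
      using bound[of "max 0 (- B)"] top by simp
    also have "\<dots> \<le> ereal B"
      by (simp add: max_def)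
    finally show ?thesis .
  qed
  then have "y = - \<infinity>"
    by (rule ereal_bot)
  then show ?thesis
    by simp
qed

theorem proposition1p4:
  fixes p :: real
  assumes "p > 1" and "p * (real DIM('a::euclidean_space) - 2) < real DIM('a)"
  shows "(INF a \<in> {0<..}. ereal a - enn2ereal (rho p a TYPE('a))) = - enn2ereal (chi p TYPE('a))"
proof (rule antisym)
  have beta: "energy_exponent p DIM('a) > 0"
    using energy_exponent_pos[OF assms(1) _ assms(2)] by simp
  show "(INF a \<in> {0<..}. ereal a - enn2ereal (rho p a TYPE('a))) \<le> - enn2ereal (chi p TYPE('a))"
    using INF_gap_le[OF assms(1) beta] by (rule le_neg_enn2ereal)
  show "- enn2ereal (chi p TYPE('a)) \<le> (INF a \<in> {0<..}. ereal a - enn2ereal (rho p a TYPE('a)))"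
    by (rule INF_greatest) (simp add: gap_ge_neg_chi)
qed

end
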